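(* Let $\mathcal{I}$ be an index set with $n$ elements carrying a partial order $\preceq$, and let $G=(V,E)$, $V=\mathcal{I}$, be a directed graph corresponding to $\preceq$, with $m$ edges and oriented incidence matrix $D\in\mathbb{R}^{m\times n}$. Let $\Delta$ be either $L=D^{T}D$ (general trend filtering) or the Kronecker matrix $K$ (Kronecker trend filtering, when $\mathcal{I}$ is a lattice $\{1,\dots,N\}^{k}$ and $G$ the corresponding grid graph). For $\bm{y}\in\mathbb{R}^n$ and $\lambda_{NI},\lambda_{F},\lambda_{T}>0$ define $$\hat{\bm{\beta}}^{NITF}(\bm{y},\lambda_{NI},\lambda_{T})=\arg\min_{\bm{\beta}\in\mathbb{R}^{n}}\tfrac12\|\bm{y}-\bm{\beta}\|_2^2+\lambda_{NI}\|D\bm{\beta}\|_{+}+\lambda_{T}\|\Delta\bm{\beta}\|_1,$$ $$\hat{\bm{\beta}}^{FLTF}(\bm{y},\lambda_{F},\lambda_{T})=\arg\min_{\bm{\beta}\in\mathbb{R}^{n}}\tfrac12\|\bm{y}-\bm{\beta}\|_2^2+\lambda_{F}\|D\bm{\beta}\|_1+\lambda_{T}\|\Delta\bm{\beta}\|_1.$$ Then for every $\bm{y}\in\mathbb{R}^n$ and $\lambda_{NI},\lambda_{T}>0$, $$\hat{\bm{\beta}}^{NITF}(\bm{y},\lambda_{NI},\lambda_{T})=\hat{\bm{\beta}}^{FLTF}\Big(\bm{y}-\frac{\lambda_{NI}}{2}D^{T}\bm{1},\ \frac{\lambda_{NI}}{2},\ \lambda_{T}\Big).$$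
   Context: A directed graph $G=(V,E)$ on $V=\mathcal{I}$ corresponds to the partial order $\preceq$ if a vector $\bm{\beta}$ indexed by $\mathcal{I}$ is isotonic w.r.t. $\preceq$ iff $\beta_{\bm{l}_1}\le\beta_{\bm{l}_2}$ whenever $E$ contains a directed chain of edges from $\bm{l}_1$ to $\bm{l}_2$. The oriented incidence matrix $D\in\mathbb{R}^{m\times n}$ has $D_{i,j}=1$ if vertex $j$ is the source of edge $i$, $D_{i,j}=-1$ if vertex $j$ is the target of edge $i$, and $0$ otherwise. For $\bm{x}\in\mathbb{R}^m$, $\|\bm{x}\|_{+}=\sum_i\max(x_i,0)$. For the lattice $\{1,\dots,N\}^{k}$, $D^{t}\in\mathbb{R}^{(N-2)\times N}$ is the second-difference matrix whose $i$-th row has entries $1,-2,1$ in columns $i,i+1,i+2$ and zeros elsewhere, and $K$ is the vertical stack of the $k$ blocks $I_N\otimes\cdots\otimes D^{t}\otimes\cdots\otimes I_N$ ($D^{t}$ in the $j$-th position, $j=1,\dots,k$), $\otimes$ the Kronecker product. $\bm{1}$ is the all-ones vector in $\mathbb{R}^m$. *)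

theory Defs
  imports "Jordan_Normal_Form.Matrix"
begin

definition incidence_mat :: "nat \<Rightarrow> (nat \<times> nat) list \<Rightarrow> real mat" where
  "incidence_mat n es = mat (length es) n
     (\<lambda>(i,j). if j = fst (es ! i) then 1 else if j = snd (es ! i) then -1 else 0)"

definition corresponds_to_order :: "nat \<Rightarrow> (nat \<times> nat) set \<Rightarrow> (nat \<times> nat) list \<Rightarrow> bool" where
  "corresponds_to_order n R es \<longleftrightarrow>
     (\<forall>\<beta>::nat \<Rightarrow> real.
        (\<forall>(a,b)\<in>R. \<beta> a \<le> \<beta> b) \<longleftrightarrow> (\<forall>(a,b)\<in>(set es)\<^sup>+. \<beta> a \<le> \<beta> b))"

definition norm1 :: "real vec \<Rightarrow> real" where
  "norm1 x = (\<Sum>i<dim_vec x. \<bar>x $ i\<bar>)"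

definition normplus :: "real vec \<Rightarrow> real" where
  "normplus x = (\<Sum>i<dim_vec x. max (x $ i) 0)"

definition sqnorm2 :: "real vec \<Rightarrow> real" where
  "sqnorm2 x = (\<Sum>i<dim_vec x. (x $ i)^2)"

definition argmin_vec :: "nat \<Rightarrow> (real vec \<Rightarrow> real) \<Rightarrow> real vec" where
  "argmin_vec n f = (THE \<beta>. \<beta> \<in> carrier_vec n \<and> (\<forall>\<gamma>\<in>carrier_vec n. f \<beta> \<le> f \<gamma>))"

definition beta_NITF :: "real mat \<Rightarrow> real mat \<Rightarrow> real vec \<Rightarrow> real \<Rightarrow> real \<Rightarrow> real vec" where
  "beta_NITF D \<Delta> y lNI lT = argmin_vec (dim_col D)
     (\<lambda>\<beta>. 1/2 * sqnorm2 (y - \<beta>) + lNI * normplus (D *\<^sub>v \<beta>) + lT * norm1 (\<Delta> *\<^sub>v \<beta>))"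

definition beta_FLTF :: "real mat \<Rightarrow> real mat \<Rightarrow> real vec \<Rightarrow> real \<Rightarrow> real \<Rightarrow> real vec" where
  "beta_FLTF D \<Delta> y lF lT = argmin_vec (dim_col D)
     (\<lambda>\<beta>. 1/2 * sqnorm2 (y - \<beta>) + lF * norm1 (D *\<^sub>v \<beta>) + lT * norm1 (\<Delta> *\<^sub>v \<beta>))"

text \<open>Point (l_1,...,l_k) (list of length k, entries in {1..N}) has index
  sum_j (l_j - 1) N^(k-j), i.e. first coordinate most significant; this is the
  ordering matching the Kronecker product convention below.\<close>

definition lattice_pts :: "nat \<Rightarrow> nat \<Rightarrow> nat list set" where
  "lattice_pts N k = {ls. length ls = k \<and> (\<forall>l\<in>set ls. 1 \<le> l \<and> l \<le> N)}"

definition lat_idx :: "nat \<Rightarrow> nat list \<Rightarrow> nat" where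
  "lat_idx N ls = foldl (\<lambda>acc l. acc * N + (l - 1)) 0 ls"

definition lattice_order :: "nat \<Rightarrow> nat \<Rightarrow> (nat \<times> nat) set" where
  "lattice_order N k = {(lat_idx N ls, lat_idx N ms) | ls ms.
      ls \<in> lattice_pts N k \<and> ms \<in> lattice_pts N k \<and> (\<forall>j<k. ls ! j \<le> ms ! j)}"

definition grid_edges :: "nat \<Rightarrow> nat \<Rightarrow> (nat \<times> nat) set" where
  "grid_edges N k = {(lat_idx N ls, lat_idx N ms) | ls ms.
      ls \<in> lattice_pts N k \<and> ms \<in> lattice_pts N k \<and>
      (\<exists>j<k. ms = ls[j := ls ! j + 1])}"

definition kron :: "real mat \<Rightarrow> real mat \<Rightarrow> real mat" where
  "kron A B = mat (dim_row A * dim_row B) (dim_col A * dim_col B)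
     (\<lambda>(i,j). A $$ (i div dim_row B, j div dim_col B) * B $$ (i mod dim_row B, j mod dim_col B))"

definition kron_list :: "real mat list \<Rightarrow> real mat" where
  "kron_list Ms = foldr kron Ms (1\<^sub>m 1)"

definition second_diff :: "nat \<Rightarrow> real mat" where
  "second_diff N = mat (N - 2) N
     (\<lambda>(i,j). if j = i then 1 else if j = i + 1 then -2 else if j = i + 2 then 1 else 0)"

definition vstack :: "nat \<Rightarrow> real mat list \<Rightarrow> real mat" where
  "vstack nc Ms = foldr (\<lambda>A B. A @\<^sub>r B) Ms (0\<^sub>m 0 nc)"

definition kron_TF_mat :: "nat \<Rightarrow> nat \<Rightarrow> real mat" where
  "kron_TF_mat N k = vstack (N ^ k)
     (map (\<lambda>j. kron_list (map (\<lambda>p. if p = j then second_diff N else 1\<^sub>m N) [0..<k])) [0..<k])"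

end

theory Submission
  imports Defs
begin

text \<open>Since \<open>max t 0 = (\<bar>t\<bar> + t) / 2\<close>, the nearly-isotonic penalty \<open>\<lambda> \<parallel>D \<beta>\<parallel>\<^sub>+\<close> equals
  \<open>\<lambda>/2 \<parallel>D \<beta>\<parallel>\<^sub>1\<close> plus the linear term \<open>\<langle>\<lambda>/2 D\<^sup>T 1, \<beta>\<rangle>\<close>. Completing the square absorbs this
  linear term into the least-squares loss by shifting \<open>y\<close> to \<open>y - \<lambda>/2 D\<^sup>T 1\<close>. The two
  objectives then differ by a constant, so they have the same minimisers.\<close>

lemma argmin_vec_add_const:
  assumes "\<And>\<beta>. \<beta> \<in> carrier_vec n \<Longrightarrow> f \<beta> = g \<beta> + K"
  shows "argmin_vec n f = argmin_vec n g"
proof -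
  have "(\<lambda>\<beta>. \<beta> \<in> carrier_vec n \<and> (\<forall>\<gamma>\<in>carrier_vec n. f \<beta> \<le> f \<gamma>)) =
        (\<lambda>\<beta>. \<beta> \<in> carrier_vec n \<and> (\<forall>\<gamma>\<in>carrier_vec n. g \<beta> \<le> g \<gamma>))"
    using assms by (intro ext) auto
  then show ?thesis
    unfolding argmin_vec_def by simp
qed

lemma normplus_eq_norm1_plus_sum:
  "normplus x = norm1 x / 2 + (vec (dim_vec x) (\<lambda>_. 1) \<bullet> x) / 2"
proof -
  have "normplus x = (\<Sum>i<dim_vec x. \<bar>x $ i\<bar> / 2 + x $ i / 2)"
    unfolding normplus_def by (intro sum.cong) (auto simp: max_def)
  also have "\<dots> = norm1 x / 2 + (vec (dim_vec x) (\<lambda>_. 1) \<bullet> x) / 2"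
    by (simp add: norm1_def scalar_prod_def sum.distrib sum_divide_distrib atLeast0LessThan)
  finally show ?thesis .
qed

lemma half_sqnorm2_complete_square:
  assumes "y \<in> carrier_vec n" "c \<in> carrier_vec n" "\<beta> \<in> carrier_vec n"
  shows "1/2 * sqnorm2 (y - \<beta>) + c \<bullet> \<beta> =
         1/2 * sqnorm2 (y - c - \<beta>) + (\<Sum>i<n. y $ i * c $ i - (c $ i)\<^sup>2 / 2)"
  using assms
  by (simp add: sqnorm2_def scalar_prod_def atLeast0LessThan sum_distrib_left
      sum.distrib[symmetric] sum_subtractf[symmetric] power2_eq_square algebra_simps)

text \<open>Nor is the
  existence or uniqueness of minimisers, since both sides are \<open>THE\<close>-terms over the same
  predicate.\<close>

lemma beta_NITF_eq_beta_FLTF_shifted: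
  fixes D :: "real mat"
  assumes y: "y \<in> carrier_vec (dim_col D)"
  shows "beta_NITF D \<Delta> y lNI lT =
         beta_FLTF D \<Delta> (y - (lNI / 2) \<cdot>\<^sub>v (D\<^sup>T *\<^sub>v vec (dim_row D) (\<lambda>_. 1))) (lNI / 2) lT"
proof -
  define c where "c = (lNI / 2) \<cdot>\<^sub>v (D\<^sup>T *\<^sub>v vec (dim_row D) (\<lambda>_. 1))"
  have D: "D \<in> carrier_mat (dim_row D) (dim_col D)" by simp
  have c: "c \<in> carrier_vec (dim_col D)" unfolding c_def by (simp add: carrier_dim_vec)
  have penalty: "lNI * normplus (D *\<^sub>v \<beta>) = lNI / 2 * norm1 (D *\<^sub>v \<beta>) + c \<bullet> \<beta>"
    if \<beta>: "\<beta> \<in> carrier_vec (dim_col D)" for \<beta>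
  proof -
    have "vec (dim_row D) (\<lambda>_. 1) \<bullet> (D *\<^sub>v \<beta>) = (D\<^sup>T *\<^sub>v vec (dim_row D) (\<lambda>_. 1)) \<bullet> \<beta>"
      using transpose_vec_mult_scalar[OF D \<beta>, of "vec (dim_row D) (\<lambda>_. 1)"] by simp
    then show ?thesis
      using \<beta> unfolding normplus_eq_norm1_plus_sum c_def
      by (simp add: algebra_simps)
  qed
  show ?thesis
    unfolding beta_NITF_def beta_FLTF_def c_def[symmetric]
  proof (rule argmin_vec_add_const)
    fix \<beta> :: "real vec"
    assume \<beta>: "\<beta> \<in> carrier_vec (dim_col D)"
    show "1/2 * sqnorm2 (y - \<beta>) + lNI * normplus (D *\<^sub>v \<beta>) + lT * norm1 (\<Delta> *\<^sub>v \<beta>) =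
      (1/2 * sqnorm2 (y - c - \<beta>) + lNI / 2 * norm1 (D *\<^sub>v \<beta>) + lT * norm1 (\<Delta> *\<^sub>v \<beta>))
      + (\<Sum>i<dim_col D. y $ i * c $ i - (c $ i)\<^sup>2 / 2)"
      using half_sqnorm2_complete_square[OF y c \<beta>] penalty[OF \<beta>] by simp
  qed
qed

theorem theorem2p2:
  fixes n :: nat and R :: "(nat \<times> nat) set" and es :: "(nat \<times> nat) list"
    and \<Delta> :: "real mat" and y :: "real vec" and lNI lT :: real
  assumes po: "partial_order_on {..<n} R"
    and es_in: "set es \<subseteq> {..<n} \<times> {..<n}"
    and es_distinct: "distinct es"
    and es_noloop: "\<forall>(a,b)\<in>set es. a \<noteq> b"
    and corr: "corresponds_to_order n R es"
    and Delta: "\<Delta> = (incidence_mat n es)\<^sup>T * incidence_mat n es \<or>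
       (\<exists>N k. n = N ^ k \<and> R = lattice_order N k \<and> set es = grid_edges N k
              \<and> \<Delta> = kron_TF_mat N k)"
    and y: "y \<in> carrier_vec n"
    and lNI: "lNI > 0" and lT: "lT > 0"
  shows "beta_NITF (incidence_mat n es) \<Delta> y lNI lT =
         beta_FLTF (incidence_mat n es) \<Delta>
           (y - (lNI / 2) \<cdot>\<^sub>v ((incidence_mat n es)\<^sup>T *\<^sub>v vec (length es) (\<lambda>_. 1)))
           (lNI / 2) lT"
proof -
  have "incidence_mat n es \<in> carrier_mat (length es) n"
    unfolding incidence_mat_def by simp
  with beta_NITF_eq_beta_FLTF_shifted[of y "incidence_mat n es"] y show ?thesis
    by simp
qed

end
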